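(* Let $n,m\ge1$, $S=\{(x,y)\in\mathbb{R}^{n+m} : \|x\|\le\|y\|\}$, and for $\lambda\in\mathbb{R}^n$ with $\|\lambda\|=1$ let $C_\lambda=\{(x,y)\in\mathbb{R}^{n+m} : \lambda^\mathsf{T} x\ge\|y\|\}$. Then $C_\lambda$ is a maximal $S$-free set. Furthermore, if $(\bar x,\bar y)\in\mathbb{R}^{n+m}$ satisfies $\|\bar x\|>\|\bar y\|$ and $\lambda=\bar x/\|\bar x\|$, then $(\bar x,\bar y)\in\operatorname{int}(C_\lambda)$.
   Context: $\|\cdot\|$ is the Euclidean norm. For a closed set $S\subseteq\mathbb{R}^N$, a convex set $C$ is $S$-free if $\operatorname{int}(C)\cap S=\emptyset$, and maximal $S$-free if it is $S$-free and no $S$-free convex set strictly contains it. *)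

theory Defs
  imports "HOL-Analysis.Analysis"
begin

definition S_free :: "'a::euclidean_space set \<Rightarrow> 'a set \<Rightarrow> bool" where
  "S_free S C \<longleftrightarrow> convex C \<and> interior C \<inter> S = {}"

definition maximal_S_free :: "'a::euclidean_space set \<Rightarrow> 'a set \<Rightarrow> bool" where
  "maximal_S_free S C \<longleftrightarrow> S_free S C \<and> \<not> (\<exists>D. S_free S D \<and> C \<subset> D)"

end

theory Submission
  imports Defs
begin

text \<open>For a unit vector \<open>l\<close>, Cauchy-Schwarz gives \<open>l \<bullet> x \<le> norm x\<close>, so the interior
  \<open>{norm y < l \<bullet> x}\<close> of \<open>C\<^sub>l\<close> misses \<open>S\<close>. If a convex \<open>D \<supseteq> C\<^sub>l\<close> contained a point
  \<open>(x\<^sub>0, y\<^sub>0) \<notin> C\<^sub>l\<close>, then with \<open>r = norm y\<^sub>0\<close> the point \<open>(2r l - x\<^sub>0, y\<^sub>0)\<close> lies in the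
  interior of \<open>C\<^sub>l\<close>, and the midpoint \<open>(r l, y\<^sub>0)\<close> of the two would be an interior point
  of \<open>D\<close> lying in \<open>S\<close>.\<close>

lemma convex_halfcone:
  fixes l :: "'a::real_inner"
  shows "convex {(x, y::'b::real_normed_vector). norm y \<le> l \<bullet> x}"
proof (rule convexI)
  fix p q :: "'a \<times> 'b" and u v :: real
  assume "p \<in> {(x, y). norm y \<le> l \<bullet> x}" "q \<in> {(x, y). norm y \<le> l \<bullet> x}"
    and uv: "0 \<le> u" "0 \<le> v" "u + v = 1"
  then obtain x1 y1 x2 y2 where pq: "p = (x1, y1)" "q = (x2, y2)"
    and le: "norm y1 \<le> l \<bullet> x1" "norm y2 \<le> l \<bullet> x2"
    by auto
  have "norm (u *\<^sub>R y1 + v *\<^sub>R y2) \<le> u * norm y1 + v * norm y2"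
    using uv by (metis abs_of_nonneg norm_scaleR norm_triangle_ineq)
  also have "\<dots> \<le> u * (l \<bullet> x1) + v * (l \<bullet> x2)"
    using le uv by (intro add_mono mult_left_mono) auto
  finally show "u *\<^sub>R p + v *\<^sub>R q \<in> {(x, y). norm y \<le> l \<bullet> x}"
    by (simp add: pq inner_add_right)
qed

lemma interior_halfcone:
  fixes l :: "'a::real_inner"
  assumes "l \<noteq> 0"
  shows "interior {(x, y::'b::real_normed_vector). norm y \<le> l \<bullet> x} = {(x, y). norm y < l \<bullet> x}"
proof
  show "{(x, y). norm y < l \<bullet> x} \<subseteq> interior {(x, y::'b). norm y \<le> l \<bullet> x}"
  proof (rule interior_maximal)
    have "open {z :: 'a \<times> 'b. norm (snd z) < l \<bullet> fst z}"
      by (intro open_Collect_less continuous_intros)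
    then show "open {(x, y::'b). norm y < l \<bullet> x}"
      by (simp add: case_prod_beta')
  qed auto
next
  show "interior {(x, y::'b). norm y \<le> l \<bullet> x} \<subseteq> {(x, y). norm y < l \<bullet> x}"
  proof clarify
    fix x and y :: 'b
    assume "(x, y) \<in> interior {(x, y). norm y \<le> l \<bullet> x}"
    then obtain e where e: "e > 0" "ball (x, y) e \<subseteq> {(x, y). norm y \<le> l \<bullet> x}"
      by (meson mem_interior)
    define t where "t = e / (2 * norm l)"
    have t: "t > 0" "t * norm l < e"
      using e assms by (auto simp: t_def)
    have "(x - t *\<^sub>R l, y) \<in> ball (x, y) e"
      using t by (simp add: dist_Pair_Pair dist_norm)
    then have "norm y \<le> l \<bullet> x - t * (l \<bullet> l)"
      using e(2) by (auto simp: inner_diff_right)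
    moreover have "t * (l \<bullet> l) > 0"
      using assms t(1) by simp
    ultimately show "norm y < l \<bullet> x"
      by linarith
  qed
qed

lemma S_free_halfcone:
  fixes l :: "'a::euclidean_space"
  assumes l: "norm l = 1"
  shows "S_free {(x, y::'b::euclidean_space). norm x \<le> norm y} {(x, y). norm y \<le> l \<bullet> x}"
proof -
  have "norm y < norm x" if "(x, y) \<in> interior {(x, y::'b). norm y \<le> l \<bullet> x}" for x y
  proof -
    have "l \<noteq> 0"
      using l by auto
    then have "norm y < l \<bullet> x"
      using that interior_halfcone[of l, where 'b='b] by auto
    also have "\<dots> \<le> norm x"
      using norm_cauchy_schwarz[of l x] l by simp
    finally show ?thesis .
  qed
  then show ?thesis
    by (fastforce simp: S_free_def convex_halfcone)
qed

lemma maximal_S_free_halfcone: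
  fixes l :: "'a::euclidean_space"
  assumes l: "norm l = 1"
  shows "maximal_S_free {(x, y::'b::euclidean_space). norm x \<le> norm y} {(x, y). norm y \<le> l \<bullet> x}"
    (is "maximal_S_free ?S ?C")
proof -
  have l0: "l \<noteq> 0" and ll: "l \<bullet> l = 1"
    using l by (auto simp: norm_eq_sqrt_inner)
  have "\<not> S_free ?S D" if D: "?C \<subset> D" for D
  proof
    assume "S_free ?S D"
    then have cvx: "convex D" and free: "interior D \<inter> ?S = {}"
      by (auto simp: S_free_def)
    obtain x0 y0 where p: "(x0, y0) \<in> D" "(x0, y0) \<notin> ?C"
      using D by auto
    define r where "r = norm y0"
    have "l \<bullet> ((2 * r) *\<^sub>R l - x0) > r"
      using p ll by (simp add: r_def inner_diff_right)
    then have "((2 * r) *\<^sub>R l - x0, y0) \<in> interior D"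
      using interior_halfcone[OF l0] interior_mono[OF psubset_imp_subset[OF D]]
      by (auto simp: r_def)
    from mem_interior_convex_shrink[OF cvx this p(1), of "1/2"]
    have "(x0, y0) - (1/2) *\<^sub>R ((x0, y0) - ((2 * r) *\<^sub>R l - x0, y0)) \<in> interior D"
      by simp
    moreover have "(x0, y0) - (1/2) *\<^sub>R ((x0, y0) - ((2 * r) *\<^sub>R l - x0, y0)) = (r *\<^sub>R l, y0)"
      by (simp add: scaleR_diff_right flip: scaleR_add_left)
    ultimately have "(r *\<^sub>R l, y0) \<in> interior D"
      by simp
    moreover have "(r *\<^sub>R l, y0) \<in> ?S"
      using l by (simp add: r_def)
    ultimately show False
      using free by blast
  qed
  then show ?thesis
    using S_free_halfcone[OF l] by (auto simp: maximal_S_free_def)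
qed

theorem theorem7:
  fixes S :: "((real^'n) \<times> (real^'m)) set"
    and C :: "real^'n \<Rightarrow> ((real^'n) \<times> (real^'m)) set"
  defines "S \<equiv> {(x, y). norm x \<le> norm y}"
  defines "C \<equiv> (\<lambda>l. {(x, y). l \<bullet> x \<ge> norm y})"
  shows "(\<forall>l. norm l = 1 \<longrightarrow> maximal_S_free S (C l)) \<and>
         (\<forall>xb yb l. norm xb > norm yb \<and> l = xb /\<^sub>R norm xb \<longrightarrow> (xb, yb) \<in> interior (C l))"
proof (intro conjI allI impI)
  show "maximal_S_free S (C l)" if "norm l = 1" for l
    using maximal_S_free_halfcone[OF that] by (simp add: S_def C_def)
next
  fix xb :: "real^'n" and yb :: "real^'m" and l
  assume "norm xb > norm yb \<and> l = xb /\<^sub>R norm xb"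
  then have less: "norm yb < norm xb" and l: "l = xb /\<^sub>R norm xb"
    by auto
  then have "xb \<noteq> 0"
    by auto
  then have "l \<noteq> 0" and "l \<bullet> xb = norm xb"
    by (auto simp: l dot_square_norm power2_eq_square)
  with less show "(xb, yb) \<in> interior (C l)"
    by (simp add: C_def interior_halfcone)
qed

end
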